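(* Let $n\ge1$ and let $A\in\mathbb{R}^{2^n\times 2^n}$ be a symmetric matrix with non-negative entries, represented by a dictionary data structure with $s_0\le 2^n$ data items in the following sense: there are positive reals $A_0,\dots,A_{s_0-1}$, sets $S_c(l)\subseteq[0,2^n-1]$ for $l\in[0,s_0-1]$, and for each $j\in[0,2^n-1]$ a map $l\mapsto c_j(l)\in[0,2^n-1]$ (defined for $l$ with $j\in S_c(l)$) which is injective in $l$, such that the pairs $(c_j(l),j)$ are pairwise distinct and $$A=\sum_{l=0}^{s_0-1}\sum_{j\in S_c(l)}A_l\ket{c_j(l)}\bra{j}.$$ Let $m=\lceil\log_2 s_0\rceil$. Consider registers idx ($n$ qubits, split as $n-m$ high qubits and $m$ low qubits), del1 and del0 (one qubit each) and a system register ($n$ qubits). Suppose $O_c$ is a unitary on idx$\otimes$del1$\otimes$system such that $$O_c\ket{0}^{\otimes(n-m)}\ket{l}_{\rm idx}\ket{0}_{\rm del1}\ket{j}=\begin{cases}\ket{c_j(l)}_{\rm idx}\ket{0}_{\rm del1}\ket{j}, & \text{if } j\in S_c(l)\text{ and } l\in[0,s_0-1],\\ \ket{0}^{\otimes(n-m)}\ket{l}_{\rm idx}\ket{1}_{\rm del1}\ket{j}, & \text{if } j\notin S_c(l)\text{ or } l\in[s_0,2^m-1],\end{cases}$$ and $\mathrm{PREP}$ is a unitary on the low $m$ qubits of idx with $\mathrm{PREP}\ket{0}^{\otimes m}=\frac{1}{\sqrt{\sum_{l=0}^{s_0-1}A_l}}\sum_{l=0}^{s_0-1}\sqrt{A_l}\ket{l}$.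 Let $W=O_c(\mathrm{PREP}\otimes I)$ (with $O_c$ acting trivially on del0), let $S$ be the unitary that swaps the qubits del1 and del0 and swaps the $n$-qubit registers idx and system, and let $U_A=W^\dagger S W$. Then $U_A$ is a Hermitian block encoding of $A$ with subnormalization $\sum_{l=0}^{s_0-1}A_l$, i.e. $U_A$ is unitary and Hermitian and $$\big(\bra{0}^{\otimes n}_{\rm idx}\bra{0}_{\rm del1}\bra{0}_{\rm del0}\otimes I_{2^n}\big)U_A\big(\ket{0}^{\otimes n}_{\rm idx}\ket{0}_{\rm del1}\ket{0}_{\rm del0}\otimes I_{2^n}\big)=\frac{A}{\sum_{l=0}^{s_0-1}A_l}.$$
   Context: $[a,b]=\{a,\dots,b\}$; $\ket{j}$ denotes the computational basis state of the binary representation of $j$; $I_N$ is the $N\times N$ identity. A Hermitian block encoding of a Hermitian matrix is a block encoding $U_A$ which is itself a Hermitian unitary. *)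

theory Defs
  imports Complex_Main "Jordan_Normal_Form.Matrix"
begin

definition dagger :: "complex mat \<Rightarrow> complex mat" where
  "dagger M = transpose_mat (map_mat cnj M)"

definition unitary_mat :: "nat \<Rightarrow> complex mat \<Rightarrow> bool" where
  "unitary_mat N U \<longleftrightarrow> U \<in> carrier_mat N N \<and> dagger U * U = 1\<^sub>m N \<and> U * dagger U = 1\<^sub>m N"

definition hermitian_mat :: "complex mat \<Rightarrow> bool" where
  "hermitian_mat M \<longleftrightarrow> dagger M = M"

text \<open>Total register: idx (n qubits) , del1 (1 qubit), del0 (1 qubit), system (n qubits),
  most significant first.
  Within idx, a = h*2^m + l where h are the n-m high qubits and l the m low qubits.\<close>

definition enc4 :: "nat \<Rightarrow> nat \<Rightarrow> nat \<Rightarrow> nat \<Rightarrow> nat \<Rightarrow> nat" where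
  "enc4 n a b c j = a * 2^(n+2) + b * 2^(n+1) + c * 2^n + j"

text \<open>Register idx del1 system (the space O_c acts on): |a>|b>|j> has index a*2^(n+1)+b*2^n+j.\<close>
definition enc3 :: "nat \<Rightarrow> nat \<Rightarrow> nat \<Rightarrow> nat \<Rightarrow> nat" where
  "enc3 n a b j = a * 2^(n+1) + b * 2^n + j"

definition r_idx :: "nat \<Rightarrow> nat \<Rightarrow> nat" where "r_idx n i = i div 2^(n+2)"
definition r_d1 :: "nat \<Rightarrow> nat \<Rightarrow> nat" where "r_d1 n i = (i div 2^(n+1)) mod 2"
definition r_d0 :: "nat \<Rightarrow> nat \<Rightarrow> nat" where "r_d0 n i = (i div 2^n) mod 2"
definition r_sys :: "nat \<Rightarrow> nat \<Rightarrow> nat" where "r_sys n i = i mod 2^n"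

text \<open>O_c (on idx, del1, system) extended by the identity on del0.\<close>
definition ext_del0 :: "nat \<Rightarrow> complex mat \<Rightarrow> complex mat" where
  "ext_del0 n Q = mat (2^(2*n+2)) (2^(2*n+2)) (\<lambda>(i,k).
     if r_d0 n i = r_d0 n k
     then Q $$ (enc3 n (r_idx n i) (r_d1 n i) (r_sys n i), enc3 n (r_idx n k) (r_d1 n k) (r_sys n k))
     else 0)"

text \<open>PREP (on the m low qubits of idx) tensored with the identity on everything else.\<close>
definition ext_prep :: "nat \<Rightarrow> nat \<Rightarrow> complex mat \<Rightarrow> complex mat" where
  "ext_prep n m P = mat (2^(2*n+2)) (2^(2*n+2)) (\<lambda>(i,k).
     if r_idx n i div 2^m = r_idx n k div 2^m \<and> r_d1 n i = r_d1 n k \<and> r_d0 n i = r_d0 n k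
        \<and> r_sys n i = r_sys n k
     then P $$ (r_idx n i mod 2^m, r_idx n k mod 2^m)
     else 0)"

text \<open>The swap S: swaps del1 with del0 and idx with system, i.e. S|a>|b>|c>|j> = |j>|c>|b>|a>.\<close>
definition swap_op :: "nat \<Rightarrow> complex mat" where
  "swap_op n = mat (2^(2*n+2)) (2^(2*n+2)) (\<lambda>(i,k).
     if i = enc4 n (r_sys n k) (r_d0 n k) (r_d1 n k) (r_idx n k) then 1 else 0)"

end

theory Submission
  imports Defs
begin

(* Write x_k for the basis state |0>_idx |0>_del1 |0>_del0 |k>_sys. The column of W at x_k is
   Sum_l sqrt (A_l / Lambda) |t_l(k)>, where t_l(k) = |c_k(l)>|0>|0>|k> if k is in S_c(l), and
   otherwise a state with del1 = 1. As S is a permutation matrix, <x_i| W^dagger S W |x_k> sums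
   sqrt (A_l A_l') / Lambda over the pairs (l, l') with S t_l(k) = t_l'(i). S moves del1 to del0,
   so flagged states never match, and the surviving pairs are those with c_k(l) = i and
   c_i(l') = k. Injectivity of c_k and c_i leaves at most one l and one l', so the sum factors
   as sqrt (A_ik) sqrt (A_ki) / Lambda = A_ik / Lambda by symmetry. U_A is unitary and Hermitian
   because S is, and because O_c and PREP tensored with identities stay unitary. *)

section \<open>Adjoints, unitary and permutation matrices\<close>

lemma index_mult_mat_sum:
  assumes "A \<in> carrier_mat r c" "B \<in> carrier_mat c d" "i < r" "k < d"
  shows "(A * B) $$ (i,k) = (\<Sum>q<c. A $$ (i,q) * B $$ (q,k))"
  using assms by (auto simp: scalar_prod_def atLeast0LessThan intro!: sum.cong)

lemma index_mult_sparse_col: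
  fixes A B :: "'a :: comm_semiring_0 mat"
  assumes "A \<in> carrier_mat r c" "B \<in> carrier_mat c d" "i < r" "k < d" "finite L"
    and e_less: "\<And>l. l \<in> L \<Longrightarrow> e l < c"
    and col: "\<And>q. q < c \<Longrightarrow> B $$ (q,k) = (\<Sum>l\<in>L. if q = e l then \<beta> l else 0)"
  shows "(A * B) $$ (i,k) = (\<Sum>l\<in>L. A $$ (i, e l) * \<beta> l)"
proof -
  have "(A * B) $$ (i,k) = (\<Sum>q<c. A $$ (i,q) * B $$ (q,k))"
    by (rule index_mult_mat_sum[OF assms(1-4)])
  also have "\<dots> = (\<Sum>q<c. \<Sum>l\<in>L. if q = e l then A $$ (i,q) * \<beta> l else 0)"
    by (intro sum.cong refl) (simp add: col sum_distrib_left if_distrib cong: if_cong)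
  also have "\<dots> = (\<Sum>l\<in>L. \<Sum>q<c. if q = e l then A $$ (i,q) * \<beta> l else 0)"
    by (rule sum.swap)
  also have "\<dots> = (\<Sum>l\<in>L. A $$ (i, e l) * \<beta> l)"
    using e_less by simp
  finally show ?thesis .
qed

lemma dagger_carrier_mat: "Q \<in> carrier_mat a b \<Longrightarrow> dagger Q \<in> carrier_mat b a"
  by (auto simp: dagger_def)

lemma index_dagger: "Q \<in> carrier_mat a b \<Longrightarrow> i < b \<Longrightarrow> k < a \<Longrightarrow> dagger Q $$ (i,k) = cnj (Q $$ (k,i))"
  by (auto simp: dagger_def)

lemma dagger_dagger [simp]: "dagger (dagger Q) = Q"
  by (auto simp: dagger_def)

lemma dagger_mult:
  assumes "A \<in> carrier_mat r c" "B \<in> carrier_mat c d"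
  shows "dagger (A * B) = dagger B * dagger A"
proof (rule eq_matI)
  fix i k assume "i < dim_row (dagger B * dagger A)" "k < dim_col (dagger B * dagger A)"
  then have ik: "i < d" "k < r" using assms by (auto simp: dagger_def)
  have "dagger (A * B) $$ (i,k) = (\<Sum>q<c. cnj (A $$ (k,q)) * cnj (B $$ (q,i)))"
    using assms ik by (simp add: index_dagger[OF mult_carrier_mat[OF assms]] index_mult_mat_sum[OF assms]
        del: index_mult_mat)
  also have "\<dots> = (dagger B * dagger A) $$ (i,k)"
    using assms ik by (simp add: index_mult_mat_sum[OF dagger_carrier_mat dagger_carrier_mat]
        index_dagger mult.commute)
  finally show "dagger (A * B) $$ (i,k) = (dagger B * dagger A) $$ (i,k)" .
qed (use assms in \<open>auto simp: dagger_def\<close>)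

lemma unitary_mat_carrier: "unitary_mat N U \<Longrightarrow> U \<in> carrier_mat N N"
  by (simp add: unitary_mat_def)

lemma unitary_mat_mult:
  assumes "unitary_mat N A" "unitary_mat N B"
  shows "unitary_mat N (A * B)"
proof -
  have c: "A \<in> carrier_mat N N" "B \<in> carrier_mat N N" "dagger A \<in> carrier_mat N N" "dagger B \<in> carrier_mat N N"
    using assms by (auto simp: unitary_mat_def dagger_carrier_mat)
  have "dagger (A * B) * (A * B) = dagger B * (dagger A * A) * B"
    using c by (simp add: dagger_mult assoc_mult_mat[of _ N N _ N _ N])
  moreover have "(A * B) * dagger (A * B) = A * (B * dagger B) * dagger A"
    using c by (simp add: dagger_mult assoc_mult_mat[of _ N N _ N _ N])
  ultimately show ?thesis
    using assms c by (simp add: unitary_mat_def)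
qed

lemma unitary_mat_dagger: "unitary_mat N U \<Longrightarrow> unitary_mat N (dagger U)"
  by (auto simp: unitary_mat_def dagger_carrier_mat)

lemma hermitian_mat_conjugate:
  assumes "W \<in> carrier_mat N N" "S \<in> carrier_mat N N" "hermitian_mat S"
  shows "hermitian_mat (dagger W * S * W)"
  using assms unfolding hermitian_mat_def
  by (simp add: dagger_mult[OF dagger_carrier_mat mult_carrier_mat] dagger_mult[of S N N W]
      dagger_carrier_mat assoc_mult_mat[of _ N N _ N _ N])

lemma index_mult_unit_vec:
  fixes A :: "'a :: semiring_1 mat"
  shows "A \<in> carrier_mat r c \<Longrightarrow> i < r \<Longrightarrow> k < c \<Longrightarrow> (A *\<^sub>v unit_vec c k) $ i = A $$ (i,k)"
  by simp

definition perm_mat :: "nat \<Rightarrow> (nat \<Rightarrow> nat) \<Rightarrow> complex mat" where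
  "perm_mat N \<sigma> = mat N N (\<lambda>(i,k). if i = \<sigma> k then 1 else 0)"

lemma perm_mat_carrier: "perm_mat N \<sigma> \<in> carrier_mat N N"
  by (simp add: perm_mat_def)

lemma index_mult_perm_mat:
  assumes "A \<in> carrier_mat r N" "\<sigma> k < N" "i < r" "k < N"
  shows "(A * perm_mat N \<sigma>) $$ (i,k) = A $$ (i, \<sigma> k)"
proof -
  have "perm_mat N \<sigma> $$ (q,k) = (\<Sum>l\<in>{\<sigma> k}. if q = id l then 1 else 0)" if "q < N" for q
    using that assms by (simp add: perm_mat_def)
  then show ?thesis
    using index_mult_sparse_col[OF assms(1) perm_mat_carrier assms(3,4), where L="{\<sigma> k}" and e=id]
      assms by simp
qed

locale involution_on =
  fixes N :: nat and \<sigma> :: "nat \<Rightarrow> nat"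
  assumes less: "k < N \<Longrightarrow> \<sigma> k < N"
    and involutive: "k < N \<Longrightarrow> \<sigma> (\<sigma> k) = k"
begin

lemma hermitian_perm_mat: "hermitian_mat (perm_mat N \<sigma>)"
  unfolding hermitian_mat_def
proof (rule eq_matI)
  fix i k assume "i < dim_row (perm_mat N \<sigma>)" "k < dim_col (perm_mat N \<sigma>)"
  then have "i < N" "k < N" by (auto simp: perm_mat_def)
  then have "dagger (perm_mat N \<sigma>) $$ (i,k) = cnj (perm_mat N \<sigma> $$ (k,i))"
    by (simp add: index_dagger[OF perm_mat_carrier])
  then show "dagger (perm_mat N \<sigma>) $$ (i,k) = perm_mat N \<sigma> $$ (i,k)"
    using \<open>i < N\<close> \<open>k < N\<close> by (auto simp: perm_mat_def less involutive)
qed (auto simp: dagger_def perm_mat_def)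

lemma unitary_perm_mat: "unitary_mat N (perm_mat N \<sigma>)"
proof -
  have "perm_mat N \<sigma> * perm_mat N \<sigma> = 1\<^sub>m N"
  proof (rule eq_matI)
    fix i k assume "i < dim_row (1\<^sub>m N :: complex mat)" "k < dim_col (1\<^sub>m N :: complex mat)"
    then have "i < N" "k < N" by auto
    then have "(perm_mat N \<sigma> * perm_mat N \<sigma>) $$ (i,k) = perm_mat N \<sigma> $$ (i, \<sigma> k)"
      by (simp add: index_mult_perm_mat[OF perm_mat_carrier] less del: index_mult_mat)
    then show "(perm_mat N \<sigma> * perm_mat N \<sigma>) $$ (i,k) = 1\<^sub>m N $$ (i,k)"
      using \<open>i < N\<close> \<open>k < N\<close> by (simp add: perm_mat_def less involutive)
  qed (auto simp: perm_mat_def)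
  then show ?thesis
    using hermitian_perm_mat by (simp add: unitary_mat_def hermitian_mat_def perm_mat_carrier)
qed

lemma index_dagger_mult_perm_mult:
  assumes W: "W \<in> carrier_mat N N" and "u < N" "v < N" "finite L"
    and t_less: "\<And>l. l \<in> L \<Longrightarrow> t l < N"
    and col_u: "\<And>p. p < N \<Longrightarrow> W $$ (p,u) = (\<Sum>l\<in>L. if p = s l then a l else 0)"
    and col_v: "\<And>p. p < N \<Longrightarrow> W $$ (p,v) = (\<Sum>l\<in>L. if p = t l then b l else 0)"
  shows "(dagger W * perm_mat N \<sigma> * W) $$ (u,v) =
    (\<Sum>l\<in>L. \<Sum>l'\<in>L. if \<sigma> (t l) = s l' then cnj (a l') * b l else 0)"
proof -
  have DP: "dagger W * perm_mat N \<sigma> \<in> carrier_mat N N"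
    using mult_carrier_mat[OF dagger_carrier_mat[OF W] perm_mat_carrier] .
  have "(dagger W * perm_mat N \<sigma> * W) $$ (u,v) = (\<Sum>l\<in>L. (dagger W * perm_mat N \<sigma>) $$ (u, t l) * b l)"
    using assms by (intro index_mult_sparse_col[OF DP W]) auto
  also have "\<dots> = (\<Sum>l\<in>L. cnj (W $$ (\<sigma> (t l), u)) * b l)"
    using t_less by (intro sum.cong refl)
      (simp add: index_mult_perm_mat[OF dagger_carrier_mat[OF W]] index_dagger[OF W] less
        \<open>u < N\<close> del: index_mult_mat)
  also have "\<dots> = (\<Sum>l\<in>L. \<Sum>l'\<in>L. if \<sigma> (t l) = s l' then cnj (a l') * b l else 0)"
    using t_less by (intro sum.cong refl) (auto simp: col_u less sum_distrib_right intro!: sum.cong)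
  finally show ?thesis .
qed

end

section \<open>Register encoding\<close>

lemma enc4_eq: "enc4 n a b c j = ((a * 2 + b) * 2 + c) * 2^n + j"
  by (simp add: enc4_def algebra_simps power_add)

lemma enc3_eq: "enc3 n a b j = (a * 2 + b) * 2^n + j"
  by (simp add: enc3_def algebra_simps power_add)

lemma div_two_power_add: "(x::nat) div 2^(n+k) = x div 2^n div 2^k"
  by (simp add: power_add div_mult2_eq)

lemma div_two_power_Suc: "(x::nat) div 2^(n+1) = x div 2^n div 2"
  using div_two_power_add[of x n 1] by simp

lemma r_enc4 [simp]:
  assumes "b < 2" "c < 2" "j < 2^n"
  shows "r_idx n (enc4 n a b c j) = a" "r_d1 n (enc4 n a b c j) = b"
    "r_d0 n (enc4 n a b c j) = c" "r_sys n (enc4 n a b c j) = j"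
proof -
  have d: "enc4 n a b c j div 2^n = (a * 2 + b) * 2 + c" "enc4 n a b c j mod 2^n = j"
    using assms by (simp_all add: enc4_eq)
  show "r_idx n (enc4 n a b c j) = a" unfolding r_idx_def div_two_power_add d using assms by simp
  show "r_d1 n (enc4 n a b c j) = b" unfolding r_d1_def div_two_power_Suc d using assms by presburger
  show "r_d0 n (enc4 n a b c j) = c" unfolding r_d0_def d using assms by presburger
  show "r_sys n (enc4 n a b c j) = j" unfolding r_sys_def d by simp
qed

lemma enc4_r [simp]: "enc4 n (r_idx n i) (r_d1 n i) (r_d0 n i) (r_sys n i) = i"
proof -
  have "i = (i div 2^n) * 2^n + i mod 2^n"
    "i div 2^n = (i div 2^n div 2) * 2 + i div 2^n mod 2"
    "i div 2^n div 2 = (i div 2^n div 2 div 2) * 2 + i div 2^n div 2 mod 2"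
    "i div 2^(n+2) = i div 2^n div 2 div 2"
    by (simp_all only: div_mult_mod_eq div_two_power_add) (simp add: div_mult2_eq)
  then show ?thesis
    unfolding enc4_eq r_idx_def r_d1_def r_d0_def r_sys_def div_two_power_Suc by presburger
qed

lemma enc4_inject:
  assumes "b < 2" "c < 2" "j < 2^n" "b' < 2" "c' < 2" "j' < 2^n"
  shows "enc4 n a b c j = enc4 n a' b' c' j' \<longleftrightarrow> a = a' \<and> b = b' \<and> c = c' \<and> j = j'"
  using r_enc4[OF assms(1-3)] r_enc4[OF assms(4-6)] by metis

lemma enc3_div_mod [simp]:
  assumes "b < 2" "j < 2^n"
  shows "enc3 n a b j div 2^n div 2 = a" "enc3 n a b j div 2^n mod 2 = b" "enc3 n a b j mod 2^n = j"
  using assms by (simp_all add: enc3_eq)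

lemma enc3_div_mod_eq [simp]: "enc3 n (q div 2^n div 2) (q div 2^n mod 2) (q mod 2^n) = q"
proof -
  have "q = (q div 2^n) * 2^n + q mod 2^n" "q div 2^n = (q div 2^n div 2) * 2 + q div 2^n mod 2"
    by (simp_all only: div_mult_mod_eq)
  then show ?thesis
    unfolding enc3_eq by presburger
qed

lemma enc4_less:
  assumes "a < 2^n" "b < 2" "c < 2" "j < 2^n"
  shows "enc4 n a b c j < 2^(2*n+2)"
proof -
  have "(a * 2 + b) * 2 + c + 1 \<le> 2^n * 2 * 2"
    using assms by (simp add: algebra_simps)
  then have "((a * 2 + b) * 2 + c + 1) * 2^n \<le> 2^n * 2 * 2 * 2^n"
    by (rule mult_right_mono) simp
  moreover have "(2::nat)^(2*n+2) = 2^n * 2 * 2 * 2^n"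
    unfolding mult_2 power_add by simp
  ultimately show ?thesis
    using assms(4) by (simp add: enc4_eq algebra_simps)
qed

lemma enc3_less:
  assumes "a < 2^n" "b < 2" "j < 2^n"
  shows "enc3 n a b j < 2^(2*n+1)"
proof -
  have "a * 2 + b + 1 \<le> 2^n * 2"
    using assms by linarith
  then have "(a * 2 + b + 1) * 2^n \<le> 2^n * 2 * 2^n"
    by (rule mult_right_mono) simp
  moreover have "(2::nat)^(2*n+1) = 2^n * 2 * 2^n"
    unfolding mult_2 power_add by simp
  ultimately show ?thesis
    using assms(3) by (simp add: enc3_eq algebra_simps)
qed

lemma r_less:
  assumes "i < 2^(2*n+2)"
  shows "r_idx n i < 2^n" "r_d1 n i < 2" "r_d0 n i < 2" "r_sys n i < 2^n"
proof -
  have "(2::nat)^(2*n+2) = 2^(n+2) * 2^n"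
    unfolding mult_2 power_add by simp
  then show "r_idx n i < 2^n"
    using assms unfolding r_idx_def by (simp add: less_mult_imp_div_less mult.commute)
qed (simp_all add: r_d1_def r_d0_def r_sys_def)

section \<open>Operators acting on one tensor factor\<close>

(* Via i \<mapsto> (g i, f i), the index set {..<N} is identified with (range of g) \<times> {..<M},
   the inverse being (b, q) \<mapsto> h b q; fibre_lift N f g Q is then the identity tensored with Q. *)
definition fibre_lift :: "nat \<Rightarrow> (nat \<Rightarrow> nat) \<Rightarrow> (nat \<Rightarrow> 'b) \<Rightarrow> complex mat \<Rightarrow> complex mat" where
  "fibre_lift N f g Q = mat N N (\<lambda>(i,k). if g i = g k then Q $$ (f i, f k) else 0)"

locale fibre_chart =
  fixes N M :: nat and f :: "nat \<Rightarrow> nat" and g :: "nat \<Rightarrow> 'b" and h :: "'b \<Rightarrow> nat \<Rightarrow> nat"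
  assumes f_less: "i < N \<Longrightarrow> f i < M"
    and h_less: "i < N \<Longrightarrow> q < M \<Longrightarrow> h (g i) q < N"
    and h_f: "i < N \<Longrightarrow> h (g i) (f i) = i"
    and g_h: "i < N \<Longrightarrow> q < M \<Longrightarrow> g (h (g i) q) = g i"
    and f_h: "i < N \<Longrightarrow> q < M \<Longrightarrow> f (h (g i) q) = q"
begin

lemma fibre_lift_carrier: "fibre_lift N f g Q \<in> carrier_mat N N"
  by (simp add: fibre_lift_def)

lemma index_fibre_lift:
  "i < N \<Longrightarrow> k < N \<Longrightarrow> fibre_lift N f g Q $$ (i,k) = (if g i = g k then Q $$ (f i, f k) else 0)"
  by (simp add: fibre_lift_def)

lemma index_fibre_lift_sum:
  assumes "p < N" "k < N"
  shows "fibre_lift N f g Q $$ (p,k) = (\<Sum>q<M. if p = h (g k) q then Q $$ (q, f k) else 0)"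
proof (cases "g p = g k")
  case True
  have "p = h (g k) q \<longleftrightarrow> q = f p" if "q < M" for q
    using True h_f[OF assms(1)] f_h[OF assms(2) that] by metis
  then have "(\<Sum>q<M. if p = h (g k) q then Q $$ (q, f k) else 0)
      = (\<Sum>q<M. if q = f p then Q $$ (q, f k) else 0)"
    by (intro sum.cong) auto
  then show ?thesis
    using True assms f_less by (simp add: index_fibre_lift)
next
  case False
  have "p \<noteq> h (g k) q" if "q < M" for q
    using False g_h[OF assms(2) that] by auto
  then show ?thesis
    using False assms by (simp add: index_fibre_lift)
qed

lemma dagger_fibre_lift: "Q \<in> carrier_mat M M \<Longrightarrow> dagger (fibre_lift N f g Q) = fibre_lift N f g (dagger Q)"
  by (rule eq_matI) (auto simp: dagger_def fibre_lift_def f_less)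

lemma fibre_lift_one: "fibre_lift N f g (1\<^sub>m M) = 1\<^sub>m N"
  by (rule eq_matI) (auto simp: fibre_lift_def f_less, metis h_f)

lemma fibre_lift_mult:
  assumes "Q1 \<in> carrier_mat M M" "Q2 \<in> carrier_mat M M"
  shows "fibre_lift N f g Q1 * fibre_lift N f g Q2 = fibre_lift N f g (Q1 * Q2)"
proof (rule eq_matI)
  fix i k assume "i < dim_row (fibre_lift N f g (Q1 * Q2))" "k < dim_col (fibre_lift N f g (Q1 * Q2))"
  then have ik: "i < N" "k < N" by (auto simp: fibre_lift_def)
  have "(fibre_lift N f g Q1 * fibre_lift N f g Q2) $$ (i,k)
      = (\<Sum>q<M. fibre_lift N f g Q1 $$ (i, h (g k) q) * Q2 $$ (q, f k))"
    using ik h_less by (intro index_mult_sparse_col[OF fibre_lift_carrier fibre_lift_carrier])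
      (auto simp: index_fibre_lift_sum)
  also have "\<dots> = (if g i = g k then \<Sum>q<M. Q1 $$ (f i, q) * Q2 $$ (q, f k) else 0)"
    using ik by (auto simp: index_fibre_lift h_less g_h f_h intro!: sum.cong)
  also have "\<dots> = fibre_lift N f g (Q1 * Q2) $$ (i,k)"
    using ik assms f_less by (simp add: index_fibre_lift index_mult_mat_sum[OF assms] del: index_mult_mat)
  finally show "(fibre_lift N f g Q1 * fibre_lift N f g Q2) $$ (i,k) = fibre_lift N f g (Q1 * Q2) $$ (i,k)" .
qed (auto simp: fibre_lift_def)

lemma unitary_fibre_lift: "unitary_mat M Q \<Longrightarrow> unitary_mat N (fibre_lift N f g Q)"
  unfolding unitary_mat_def
  by (auto simp: dagger_fibre_lift fibre_lift_mult dagger_carrier_mat fibre_lift_one fibre_lift_carrier)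

end

lemma fibre_chart_del0:
  "fibre_chart (2^(2*n+2)) (2^(2*n+1)) (\<lambda>i. enc3 n (r_idx n i) (r_d1 n i) (r_sys n i)) (r_d0 n)
     (\<lambda>c q. enc4 n (q div 2^n div 2) (q div 2^n mod 2) c (q mod 2^n))"
proof (unfold_locales, goal_cases)
  case (1 i)
  from r_less[OF this] show ?case
    by (intro enc3_less)
next
  case (2 i q)
  have "q div 2^n div 2 < 2^n"
    using 2(2) by (simp add: less_mult_imp_div_less div_mult2_eq mult_2 power_add)
  with r_less[OF 2(1)] show ?case
    by (intro enc4_less) auto
next
  case (3 i)
  from r_less[OF this] show ?case
    by simp
next
  case (4 i q)
  from r_less[OF 4(1)] show ?case
    by simp
next
  case (5 i q)
  from r_less[OF 5(1)] show ?case
    by simp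
qed

lemma fibre_chart_prep:
  assumes "m \<le> n"
  shows "fibre_chart (2^(2*n+2)) (2^m) (\<lambda>i. r_idx n i mod 2^m)
     (\<lambda>i. (r_idx n i div 2^m, r_d1 n i, r_d0 n i, r_sys n i)) (\<lambda>(a,b,c,j) q. enc4 n (a * 2^m + q) b c j)"
proof (unfold_locales, goal_cases)
  case (2 i q)
  note r = r_less[OF 2(1)]
  have pw: "(2::nat)^n = 2^(n-m) * 2^m"
    using assms by (simp flip: power_add)
  then have "r_idx n i div 2^m + 1 \<le> 2^(n-m)"
    using r(1) by (simp add: less_mult_imp_div_less Suc_le_eq)
  then have "(r_idx n i div 2^m + 1) * 2^m \<le> 2^(n-m) * 2^m"
    by (rule mult_right_mono) simp
  then have "r_idx n i div 2^m * 2^m + q < 2^n"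
    using 2(2) pw by (simp add: algebra_simps)
  with r show ?case
    unfolding prod.case by (intro enc4_less) auto
next
  case (4 i q)
  from r_less[OF 4(1)] 4(2) show ?case
    by simp
next
  case (5 i q)
  from r_less[OF 5(1)] 5(2) show ?case
    by simp
qed (simp_all add: div_mult_mod_eq)

lemma ext_del0_eq_fibre_lift:
  "ext_del0 n Q = fibre_lift (2^(2*n+2)) (\<lambda>i. enc3 n (r_idx n i) (r_d1 n i) (r_sys n i)) (r_d0 n) Q"
  by (simp add: ext_del0_def fibre_lift_def)

lemma ext_prep_eq_fibre_lift:
  "ext_prep n m P = fibre_lift (2^(2*n+2)) (\<lambda>i. r_idx n i mod 2^m)
     (\<lambda>i. (r_idx n i div 2^m, r_d1 n i, r_d0 n i, r_sys n i)) P"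
  by (rule eq_matI) (auto simp: ext_prep_def fibre_lift_def)

lemma unitary_ext_del0: "unitary_mat (2^(2*n+1)) Q \<Longrightarrow> unitary_mat (2^(2*n+2)) (ext_del0 n Q)"
  unfolding ext_del0_eq_fibre_lift by (rule fibre_chart.unitary_fibre_lift[OF fibre_chart_del0])

lemma unitary_ext_prep: "m \<le> n \<Longrightarrow> unitary_mat (2^m) P \<Longrightarrow> unitary_mat (2^(2*n+2)) (ext_prep n m P)"
  unfolding ext_prep_eq_fibre_lift by (rule fibre_chart.unitary_fibre_lift[OF fibre_chart_prep])

lemma index_ext_del0_basis_col:
  assumes Q: "Q \<in> carrier_mat (2^(2*n+1)) (2^(2*n+1))"
    and "a < 2^n" "b < 2" "c < 2" "j < 2^n" "a' < 2^n" "b' < 2" "j' < 2^n" "p < 2^(2*n+2)"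
    and Q_col: "Q *\<^sub>v unit_vec (2^(2*n+1)) (enc3 n a b j) = unit_vec (2^(2*n+1)) (enc3 n a' b' j')"
  shows "ext_del0 n Q $$ (p, enc4 n a b c j) = (if p = enc4 n a' b' c j' then 1 else 0)"
proof -
  let ?M = "(2::nat)^(2*n+1)"
  have in_M: "enc3 n a b j < ?M" "enc3 n a' b' j' < ?M"
    using assms enc3_less by blast+
  have Q_entry: "Q $$ (q, enc3 n a b j) = (if q = enc3 n a' b' j' then 1 else 0)" if "q < ?M" for q
  proof -
    have "Q $$ (q, enc3 n a b j) = (Q *\<^sub>v unit_vec ?M (enc3 n a b j)) $ q"
      by (rule index_mult_unit_vec[OF Q that in_M(1), symmetric])
    then show ?thesis
      unfolding Q_col using that in_M(2) by simp
  qed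
  have "enc4 n a b c j < 2^(2*n+2)"
    using assms enc4_less by blast
  then have "ext_del0 n Q $$ (p, enc4 n a b c j)
      = (\<Sum>q<?M. if p = enc4 n (q div 2^n div 2) (q div 2^n mod 2) c (q mod 2^n)
                  then Q $$ (q, enc3 n a b j) else 0)"
    unfolding ext_del0_eq_fibre_lift
    using fibre_chart.index_fibre_lift_sum[OF fibre_chart_del0 \<open>p < 2^(2*n+2)\<close>] assms
    by (simp cong: if_cong)
  also have "\<dots> = (\<Sum>q<?M. if q = enc3 n a' b' j'
      then (if p = enc4 n (q div 2^n div 2) (q div 2^n mod 2) c (q mod 2^n) then 1 else 0) else 0)"
    by (intro sum.cong) (auto simp: Q_entry)
  finally show ?thesis
    using assms in_M by simp
qed

lemma index_ext_prep_col_zero: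
  assumes "m \<le> n" "p < 2^(2*n+2)" "j < 2^n"
  shows "ext_prep n m P $$ (p, enc4 n 0 0 0 j) = (\<Sum>l<2^m. if p = enc4 n l 0 0 j then P $$ (l,0) else 0)"
proof -
  have "enc4 n 0 0 0 j < 2^(2*n+2)"
    using assms(3) by (intro enc4_less) auto
  from fibre_chart.index_fibre_lift_sum[OF fibre_chart_prep[OF assms(1)] assms(2) this, of P]
  show ?thesis
    unfolding ext_prep_eq_fibre_lift using assms(3) by (simp cong: if_cong)
qed

section \<open>The dictionary oracle\<close>

definition swap_index :: "nat \<Rightarrow> nat \<Rightarrow> nat" where
  "swap_index n k = enc4 n (r_sys n k) (r_d0 n k) (r_d1 n k) (r_idx n k)"

lemma swap_op_eq_perm_mat: "swap_op n = perm_mat (2^(2*n+2)) (swap_index n)"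
  by (simp add: swap_op_def perm_mat_def swap_index_def)

lemma swap_index_enc4:
  "a < 2^n \<Longrightarrow> b < 2 \<Longrightarrow> c < 2 \<Longrightarrow> j < 2^n \<Longrightarrow> swap_index n (enc4 n a b c j) = enc4 n j c b a"
  by (simp add: swap_index_def)

lemma involution_on_swap_index: "involution_on (2^(2*n+2)) (swap_index n)"
proof
  fix k :: nat assume "k < 2^(2*n+2)"
  note r = r_less[OF this]
  show "swap_index n k < 2^(2*n+2)"
    unfolding swap_index_def using r by (intro enc4_less)
  show "swap_index n (swap_index n k) = k"
    unfolding swap_index_def using r by simp
qed

(* The image of |l>_idx |0>_del1 |0>_del0 |j>_sys under O_c tensored with the identity on del0;
   del1 = 1 flags j \<notin> S_c(l) or l \<ge> s0. *)
definition dict_target :: "nat \<Rightarrow> nat \<Rightarrow> (nat \<Rightarrow> nat set) \<Rightarrow> (nat \<Rightarrow> nat \<Rightarrow> nat) \<Rightarrow> nat \<Rightarrow> nat \<Rightarrow> nat" where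
  "dict_target n s0 S c l j = (if l < s0 \<and> j \<in> S l then enc4 n (c j l) 0 0 j else enc4 n l 1 0 j)"

lemma dict_target_less:
  assumes "l < 2^n" "j < 2^n" "\<forall>l<s0. \<forall>j\<in>S l. c j l < 2^n"
  shows "dict_target n s0 S c l j < 2^(2*n+2)"
proof -
  have "enc4 n (c j l) 0 0 j < 2^(2*n+2)" if "l < s0 \<and> j \<in> S l"
    using assms that by (intro enc4_less) auto
  moreover have "enc4 n l 1 0 j < 2^(2*n+2)"
    using assms by (intro enc4_less) auto
  ultimately show ?thesis
    unfolding dict_target_def by simp
qed

lemma index_ext_del0_dict_oracle:
  assumes Oc: "Oc \<in> carrier_mat (2^(2*n+1)) (2^(2*n+1))"
    and c_range: "\<forall>l<s0. \<forall>j\<in>S l. c j l < 2^n"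
    and Oc_in: "\<forall>l<s0. \<forall>j<2^n. j \<in> S l \<longrightarrow>
      Oc *\<^sub>v unit_vec (2^(2*n+1)) (enc3 n l 0 j) = unit_vec (2^(2*n+1)) (enc3 n (c j l) 0 j)"
    and Oc_out: "\<forall>l<2^m. \<forall>j<2^n. (j \<notin> S l \<or> s0 \<le> l) \<longrightarrow>
      Oc *\<^sub>v unit_vec (2^(2*n+1)) (enc3 n l 0 j) = unit_vec (2^(2*n+1)) (enc3 n l 1 j)"
    and "m \<le> n" "l < 2^m" "j < 2^n" "p < 2^(2*n+2)"
  shows "ext_del0 n Oc $$ (p, enc4 n l 0 0 j) = (if p = dict_target n s0 S c l j then 1 else 0)"
proof -
  have "l < 2^n"
    using \<open>m \<le> n\<close> \<open>l < 2^m\<close> power_increasing[of m n "2::nat"] by linarith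
  show ?thesis
  proof (cases "l < s0 \<and> j \<in> S l")
    case True
    then have "Oc *\<^sub>v unit_vec (2^(2*n+1)) (enc3 n l 0 j) = unit_vec (2^(2*n+1)) (enc3 n (c j l) 0 j)"
      using Oc_in \<open>j < 2^n\<close> by blast
    then have "ext_del0 n Oc $$ (p, enc4 n l 0 0 j) = (if p = enc4 n (c j l) 0 0 j then 1 else 0)"
      using assms True \<open>l < 2^n\<close> by (intro index_ext_del0_basis_col[OF Oc]) auto
    then show ?thesis
      using True by (simp add: dict_target_def)
  next
    case False
    then have "Oc *\<^sub>v unit_vec (2^(2*n+1)) (enc3 n l 0 j) = unit_vec (2^(2*n+1)) (enc3 n l 1 j)"
      using Oc_out \<open>l < 2^m\<close> \<open>j < 2^n\<close> by auto
    then have "ext_del0 n Oc $$ (p, enc4 n l 0 0 j) = (if p = enc4 n l 1 0 j then 1 else 0)"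
      using assms \<open>l < 2^n\<close> by (intro index_ext_del0_basis_col[OF Oc]) auto
    then show ?thesis
      using False by (auto simp: dict_target_def)
  qed
qed

lemma index_ext_del0_ext_prep_col:
  assumes Oc: "Oc \<in> carrier_mat (2^(2*n+1)) (2^(2*n+1))"
    and c_range: "\<forall>l<s0. \<forall>j\<in>S l. c j l < 2^n"
    and Oc_in: "\<forall>l<s0. \<forall>j<2^n. j \<in> S l \<longrightarrow>
      Oc *\<^sub>v unit_vec (2^(2*n+1)) (enc3 n l 0 j) = unit_vec (2^(2*n+1)) (enc3 n (c j l) 0 j)"
    and Oc_out: "\<forall>l<2^m. \<forall>j<2^n. (j \<notin> S l \<or> s0 \<le> l) \<longrightarrow>
      Oc *\<^sub>v unit_vec (2^(2*n+1)) (enc3 n l 0 j) = unit_vec (2^(2*n+1)) (enc3 n l 1 j)"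
    and PREP: "PREP \<in> carrier_mat (2^m) (2^m)"
    and PREP_0: "PREP *\<^sub>v unit_vec (2^m) 0 = vec (2^m) (\<lambda>l. if l < s0 then \<alpha> l else 0)"
    and "m \<le> n" "s0 \<le> 2^m" "j < 2^n" "p < 2^(2*n+2)"
  shows "(ext_del0 n Oc * ext_prep n m PREP) $$ (p, enc4 n 0 0 0 j) =
    (\<Sum>l<s0. if p = dict_target n s0 S c l j then \<alpha> l else 0)"
proof -
  have PREP_col: "PREP $$ (l,0) = (if l < s0 then \<alpha> l else 0)" if "l < 2^m" for l
  proof -
    have "PREP $$ (l,0) = (PREP *\<^sub>v unit_vec (2^m) 0) $ l"
      using index_mult_unit_vec[OF PREP that, of 0] by simp
    then show ?thesis
      using that unfolding PREP_0 by simp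
  qed
  have enc_less: "enc4 n l 0 0 j < 2^(2*n+2)" if "l < 2^m" for l
  proof -
    have "l < 2^n"
      using that \<open>m \<le> n\<close> power_increasing[of m n "2::nat"] by linarith
    then show ?thesis
      using \<open>j < 2^n\<close> by (intro enc4_less) auto
  qed
  have del0_carrier: "ext_del0 n Oc \<in> carrier_mat (2^(2*n+2)) (2^(2*n+2))"
    by (simp add: ext_del0_def)
  have prep_carrier: "ext_prep n m PREP \<in> carrier_mat (2^(2*n+2)) (2^(2*n+2))"
    by (simp add: ext_prep_def)
  have "(ext_del0 n Oc * ext_prep n m PREP) $$ (p, enc4 n 0 0 0 j)
      = (\<Sum>l<2^m. ext_del0 n Oc $$ (p, enc4 n l 0 0 j) * PREP $$ (l,0))"
    using assms enc_less
    by (intro index_mult_sparse_col[OF del0_carrier prep_carrier]) (auto intro: enc4_less index_ext_prep_col_zero)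
  also have "\<dots> = (\<Sum>l<2^m. if p = dict_target n s0 S c l j then PREP $$ (l,0) else 0)"
    using assms by (intro sum.cong refl) (simp add: index_ext_del0_dict_oracle[OF Oc c_range Oc_in Oc_out])
  also have "\<dots> = (\<Sum>l<s0. if p = dict_target n s0 S c l j then \<alpha> l else 0)"
    using \<open>s0 \<le> 2^m\<close> by (intro sum.mono_neutral_cong_right) (auto simp: PREP_col)
  finally show ?thesis .
qed

lemma swap_dict_target_iff:
  assumes "l < s0" "l' < s0" "s0 \<le> 2^n" "i < 2^n" "k < 2^n" "\<forall>l<s0. \<forall>j\<in>S l. c j l < 2^n"
  shows "swap_index n (dict_target n s0 S c l k) = dict_target n s0 S c l' i
    \<longleftrightarrow> k \<in> S l \<and> c k l = i \<and> i \<in> S l' \<and> c i l' = k"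
  using assms by (auto simp: dict_target_def swap_index_enc4 enc4_inject)

lemma index_swap_conjugate_dict:
  fixes \<beta> :: "nat \<Rightarrow> real"
  assumes W: "W \<in> carrier_mat (2^(2*n+2)) (2^(2*n+2))"
    and W_col: "\<And>p j. p < 2^(2*n+2) \<Longrightarrow> j < 2^n \<Longrightarrow> W $$ (p, enc4 n 0 0 0 j) =
      (\<Sum>l<s0. if p = dict_target n s0 S c l j then complex_of_real (\<beta> l) else 0)"
    and c_range: "\<forall>l<s0. \<forall>j\<in>S l. c j l < 2^n"
    and "s0 \<le> 2^n" "i < 2^n" "k < 2^n"
  shows "(dagger W * swap_op n * W) $$ (enc4 n 0 0 0 i, enc4 n 0 0 0 k) = complex_of_real
    (\<Sum>l<s0. \<Sum>l'<s0. if k \<in> S l \<and> c k l = i \<and> i \<in> S l' \<and> c i l' = k then \<beta> l * \<beta> l' else 0)"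
proof -
  interpret swap: involution_on "2^(2*n+2)" "swap_index n"
    by (rule involution_on_swap_index)
  have target_less: "dict_target n s0 S c l j < 2^(2*n+2)" if "l < s0" "j < 2^n" for l j
    using that assms by (intro dict_target_less) auto
  have "(dagger W * swap_op n * W) $$ (enc4 n 0 0 0 i, enc4 n 0 0 0 k) = (\<Sum>l<s0. \<Sum>l'<s0.
      if swap_index n (dict_target n s0 S c l k) = dict_target n s0 S c l' i
      then cnj (complex_of_real (\<beta> l')) * complex_of_real (\<beta> l) else 0)"
    unfolding swap_op_eq_perm_mat
    using assms target_less enc4_less[of 0 n 0 0 i] enc4_less[of 0 n 0 0 k]
    by (intro swap.index_dagger_mult_perm_mult[OF W]) auto
  also have "\<dots> = complex_of_real (\<Sum>l<s0. \<Sum>l'<s0.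
      if k \<in> S l \<and> c k l = i \<and> i \<in> S l' \<and> c i l' = k then \<beta> l * \<beta> l' else 0)"
    unfolding of_real_sum using assms
    by (intro sum.cong refl) (simp add: swap_dict_target_iff mult.commute)
  finally show ?thesis .
qed

section \<open>Dictionary sums\<close>

lemma sum_if_at_most_one_comp:
  assumes "finite L" "\<phi> 0 = 0" and unique: "\<And>l l'. l \<in> L \<Longrightarrow> l' \<in> L \<Longrightarrow> P l \<Longrightarrow> P l' \<Longrightarrow> l = l'"
  shows "(\<Sum>l\<in>L. if P l then \<phi> (f l) else 0) = \<phi> (\<Sum>l\<in>L. if P l then f l else 0)"
proof (cases "\<exists>l\<in>L. P l")
  case True
  then obtain l0 where l0: "l0 \<in> L" "P l0" by blast
  then have P_iff: "P l \<longleftrightarrow> l = l0" if "l \<in> L" for l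
    using unique that by blast
  have "(\<Sum>l\<in>L. if P l then \<phi> (f l) else 0) = (\<Sum>l\<in>L. if l = l0 then \<phi> (f l) else 0)"
    using P_iff by (intro sum.cong) auto
  also have "\<dots> = \<phi> (\<Sum>l\<in>L. if l = l0 then f l else 0)"
    using \<open>finite L\<close> l0 by simp
  also have "(\<Sum>l\<in>L. if l = l0 then f l else 0) = (\<Sum>l\<in>L. if P l then f l else 0)"
    using P_iff by (intro sum.cong) auto
  finally show ?thesis .
next
  case False
  then show ?thesis
    using \<open>\<phi> 0 = 0\<close> by simp
qed

lemma dictionary_entry_eq:
  fixes s0 :: nat and S :: "nat \<Rightarrow> nat set" and c :: "nat \<Rightarrow> nat \<Rightarrow> nat" and Aval :: "nat \<Rightarrow> real"
  assumes S_sub: "\<forall>l<s0. S l \<subseteq> {0..<2^n}"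
    and A_dict: "\<forall>i<2^n. \<forall>k<2^n. A $$ (i,k) = (\<Sum>l<s0. \<Sum>j\<in>S l. if c j l = i \<and> j = k then Aval l else 0)"
    and "i < 2^n" "k < 2^n"
  shows "A $$ (i,k) = (\<Sum>l<s0. if k \<in> S l \<and> c k l = i then Aval l else 0)"
proof -
  have "(\<Sum>j\<in>S l. if c j l = i \<and> j = k then Aval l else 0) = (if k \<in> S l \<and> c k l = i then Aval l else 0)"
    if "l < s0" for l
  proof -
    have "finite (S l)"
      using S_sub that finite_subset by blast
    moreover have "(\<Sum>j\<in>S l. if c j l = i \<and> j = k then Aval l else 0)
        = (\<Sum>j\<in>S l. if j = k then (if c k l = i then Aval l else 0) else 0)"
      by (intro sum.cong) auto
    ultimately show ?thesis
      by simp
  qed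
  then show ?thesis
    using A_dict assms by simp
qed

lemma dictionary_pair_sum:
  fixes s0 :: nat and S :: "nat \<Rightarrow> nat set" and c :: "nat \<Rightarrow> nat \<Rightarrow> nat" and Aval :: "nat \<Rightarrow> real"
  assumes A_carrier: "A \<in> carrier_mat (2^n) (2^n)" and A_sym: "transpose_mat A = A"
    and A_nonneg: "\<forall>i<2^n. \<forall>k<2^n. A $$ (i,k) \<ge> 0"
    and \<Lambda>_nonneg: "\<Lambda> \<ge> 0"
    and S_sub: "\<forall>l<s0. S l \<subseteq> {0..<2^n}"
    and c_inj: "\<forall>j<2^n. inj_on (c j) {l. l < s0 \<and> j \<in> S l}"
    and A_dict: "\<forall>i<2^n. \<forall>k<2^n. A $$ (i,k) = (\<Sum>l<s0. \<Sum>j\<in>S l. if c j l = i \<and> j = k then Aval l else 0)"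
    and "i < 2^n" "k < 2^n"
  shows "(\<Sum>l<s0. \<Sum>l'<s0. if k \<in> S l \<and> c k l = i \<and> i \<in> S l' \<and> c i l' = k
      then sqrt (Aval l) / sqrt \<Lambda> * (sqrt (Aval l') / sqrt \<Lambda>) else 0) = A $$ (i,k) / \<Lambda>"
proof -
  have sqrt_entry: "(\<Sum>l<s0. if j \<in> S l \<and> c j l = i' then sqrt (Aval l) else 0) = sqrt (A $$ (i',j))"
    if "i' < 2^n" "j < 2^n" for i' j
  proof -
    have "l = l'" if "l < s0" "l' < s0" "j \<in> S l \<and> c j l = i'" "j \<in> S l' \<and> c j l' = i'" for l l'
      using c_inj \<open>j < 2^n\<close> that unfolding inj_on_def by auto
    then show ?thesis
      unfolding dictionary_entry_eq[OF S_sub A_dict that]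
      by (intro sum_if_at_most_one_comp[where \<phi>=sqrt]) auto
  qed
  have "A $$ (k,i) = A $$ (i,k)"
    using A_sym A_carrier \<open>i < 2^n\<close> \<open>k < 2^n\<close> by (metis carrier_matD index_transpose_mat(1))
  then have "sqrt (A $$ (i,k)) * sqrt (A $$ (k,i)) = A $$ (i,k)"
    using A_nonneg \<open>i < 2^n\<close> \<open>k < 2^n\<close> by simp
  moreover have "(\<Sum>l<s0. \<Sum>l'<s0. if k \<in> S l \<and> c k l = i \<and> i \<in> S l' \<and> c i l' = k
      then sqrt (Aval l) / sqrt \<Lambda> * (sqrt (Aval l') / sqrt \<Lambda>) else 0)
    = (\<Sum>l<s0. if k \<in> S l \<and> c k l = i then sqrt (Aval l) else 0)
      * (\<Sum>l'<s0. if i \<in> S l' \<and> c i l' = k then sqrt (Aval l') else 0) / \<Lambda>"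
    using \<Lambda>_nonneg by (simp add: sum_product sum_divide_distrib if_distrib cong: if_cong)
      (auto intro!: sum.cong)
  ultimately show ?thesis
    using sqrt_entry \<open>i < 2^n\<close> \<open>k < 2^n\<close> by simp
qed

lemma nat_ceiling_log2_bounds:
  fixes s0 n :: nat
  assumes "1 \<le> s0" "s0 \<le> 2^n"
  shows "s0 \<le> 2^(nat \<lceil>log 2 (real s0)\<rceil>)" "nat \<lceil>log 2 (real s0)\<rceil> \<le> n"
proof -
  have "real s0 = 2 powr (log 2 (real s0))"
    using assms by simp
  also have "\<dots> \<le> 2 powr (real (nat \<lceil>log 2 (real s0)\<rceil>))"
    using assms by (intro powr_mono) auto
  also have "\<dots> = 2 ^ (nat \<lceil>log 2 (real s0)\<rceil>)"
    by (simp add: powr_realpow)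
  finally show "s0 \<le> 2^(nat \<lceil>log 2 (real s0)\<rceil>)"
    by (simp flip: of_nat_le_iff)
  have "log 2 (real s0) \<le> log 2 (2^n)"
    using assms by (subst log_le_cancel_iff) (auto simp flip: of_nat_le_iff)
  then show "nat \<lceil>log 2 (real s0)\<rceil> \<le> n"
    by (simp add: log_nat_power)
qed

theorem theorem2:
  fixes n s0 :: nat
    and A :: "real mat"
    and Aval :: "nat \<Rightarrow> real"
    and S :: "nat \<Rightarrow> nat set"
    and c :: "nat \<Rightarrow> nat \<Rightarrow> nat"
    and Oc PREP :: "complex mat"
  defines "m \<equiv> nat \<lceil>log 2 (real s0)\<rceil>"
  defines "\<Lambda> \<equiv> (\<Sum>l<s0. Aval l)"
  defines "W \<equiv> ext_del0 n Oc * ext_prep n m PREP"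
  defines "U_A \<equiv> dagger W * swap_op n * W"
  assumes n_pos: "n \<ge> 1"
    and s0_pos: "1 \<le> s0" and s0_le: "s0 \<le> 2^n"
    and A_carrier: "A \<in> carrier_mat (2^n) (2^n)"
    and A_sym: "transpose_mat A = A"
    and A_nonneg: "\<forall>i<2^n. \<forall>k<2^n. A $$ (i,k) \<ge> 0"
    and Aval_pos: "\<forall>l<s0. Aval l > 0"
    and S_sub: "\<forall>l<s0. S l \<subseteq> {0..<2^n}"
    and c_range: "\<forall>l<s0. \<forall>j\<in>S l. c j l < 2^n"
    and c_inj: "\<forall>j<2^n. inj_on (c j) {l. l < s0 \<and> j \<in> S l}"
    and pairs_distinct: "\<forall>l<s0. \<forall>l'<s0. \<forall>j\<in>S l. \<forall>j'\<in>S l'.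
                            (c j l, j) = (c j' l', j') \<longrightarrow> (l, j) = (l', j')"
    and A_dict: "\<forall>i<2^n. \<forall>k<2^n.
                   A $$ (i,k) = (\<Sum>l<s0. \<Sum>j\<in>S l. if c j l = i \<and> j = k then Aval l else 0)"
    and Oc_unitary: "unitary_mat (2^(2*n+1)) Oc"
    and Oc_in: "\<forall>l<s0. \<forall>j<2^n. j \<in> S l \<longrightarrow>
                  Oc *\<^sub>v unit_vec (2^(2*n+1)) (enc3 n l 0 j) = unit_vec (2^(2*n+1)) (enc3 n (c j l) 0 j)"
    and Oc_out: "\<forall>l<2^m. \<forall>j<2^n. (j \<notin> S l \<or> s0 \<le> l) \<longrightarrow>
                  Oc *\<^sub>v unit_vec (2^(2*n+1)) (enc3 n l 0 j) = unit_vec (2^(2*n+1)) (enc3 n l 1 j)"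
    and PREP_unitary: "unitary_mat (2^m) PREP"
    and PREP_0: "PREP *\<^sub>v unit_vec (2^m) 0 =
                   vec (2^m) (\<lambda>l. if l < s0 then complex_of_real (sqrt (Aval l) / sqrt \<Lambda>) else 0)"
  shows "unitary_mat (2^(2*n+2)) U_A \<and> hermitian_mat U_A \<and>
         (\<forall>i<2^n. \<forall>k<2^n.
            U_A $$ (enc4 n 0 0 0 i, enc4 n 0 0 0 k) = complex_of_real (A $$ (i,k) / \<Lambda>))"
proof -
  let ?N = "(2::nat)^(2*n+2)"
  have m_bounds: "s0 \<le> 2^m" "m \<le> n"
    using nat_ceiling_log2_bounds[OF s0_pos s0_le] unfolding m_def by auto
  have W_unitary: "unitary_mat ?N W"
    unfolding W_def using m_bounds Oc_unitary PREP_unitary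
    by (intro unitary_mat_mult unitary_ext_del0 unitary_ext_prep)
  then have W_carrier: "W \<in> carrier_mat ?N ?N"
    by (rule unitary_mat_carrier)
  interpret swap: involution_on ?N "swap_index n"
    by (rule involution_on_swap_index)
  have "unitary_mat ?N U_A"
    unfolding U_A_def swap_op_eq_perm_mat
    by (intro unitary_mat_mult unitary_mat_dagger W_unitary swap.unitary_perm_mat)
  moreover have "hermitian_mat U_A"
    unfolding U_A_def swap_op_eq_perm_mat
    by (rule hermitian_mat_conjugate[OF W_carrier perm_mat_carrier swap.hermitian_perm_mat])
  moreover have "U_A $$ (enc4 n 0 0 0 i, enc4 n 0 0 0 k) = complex_of_real (A $$ (i,k) / \<Lambda>)"
    if i: "i < 2^n" and k: "k < 2^n" for i k
  proof -
    have W_col: "W $$ (p, enc4 n 0 0 0 j) = (\<Sum>l<s0. if p = dict_target n s0 S c l j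
        then complex_of_real (sqrt (Aval l) / sqrt \<Lambda>) else 0)" if "p < ?N" "j < 2^n" for p j
      unfolding W_def using that m_bounds
      by (intro index_ext_del0_ext_prep_col[OF unitary_mat_carrier[OF Oc_unitary] c_range Oc_in Oc_out
            unitary_mat_carrier[OF PREP_unitary] PREP_0])
    have "\<Lambda> \<ge> 0"
      unfolding \<Lambda>_def using Aval_pos by (intro sum_nonneg) (simp add: less_imp_le)
    have "U_A $$ (enc4 n 0 0 0 i, enc4 n 0 0 0 k) = complex_of_real (\<Sum>l<s0. \<Sum>l'<s0.
        if k \<in> S l \<and> c k l = i \<and> i \<in> S l' \<and> c i l' = k
        then sqrt (Aval l) / sqrt \<Lambda> * (sqrt (Aval l') / sqrt \<Lambda>) else 0)"
      unfolding U_A_def by (rule index_swap_conjugate_dict[OF W_carrier W_col c_range s0_le i k])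
    also have "\<dots> = complex_of_real (A $$ (i,k) / \<Lambda>)"
      using dictionary_pair_sum[OF A_carrier A_sym A_nonneg \<open>\<Lambda> \<ge> 0\<close> S_sub c_inj A_dict i k] by simp
    finally show ?thesis .
  qed
  ultimately show ?thesis
    by blast
qed

end
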